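(* Let $q\ge1$ be an integer and let $X$ be a random variable such that $qX$ is integer-valued almost surely. Then for every integer $r\ge1$ with $\mathbb E|X|^r<\infty$, \[ \mathbb E\big(\lfloor X\rfloor^r\big)=\mathrm i^{-r}\sum_{j=0}^{q-1}\frac{d^r}{dt^r}\big(h_q(t)\varphi_X(t)\big)\Big|_{t=2\pi j} \quad\text{and}\quad \mathbb E\big(\langle X\rangle^r\big)=\mathrm i^{-r}\sum_{j=0}^{q-1}\frac{d^r}{dt^r}\big(\tilde h_q(t)\varphi_X(t)\big)\Big|_{t=2\pi j}. \]
   Context: For a random variable $Y$, $\varphi_Y(t):=\mathbb E\, e^{\mathrm i tY}$ is its characteristic function. $\lfloor x\rfloor$ is $x$ rounded down to an integer, and $\langle x\rangle:=\lfloor x+\tfrac12\rfloor$ is $x$ rounded to the nearest integer, with ties broken upward. Define \[ h_q(t):=\frac1q\sum_{k=0}^{q-1}e^{-\mathrm i tk/q}. \] If $q$ is even, define $\tilde h_q(t):=\frac1q\sum_{k=-q/2}^{q/2-1}e^{-\mathrm i tk/q}$. If $q$ is odd, define $\tilde h_q(t):=\frac1q\sum_{k=-(q-1)/2}^{(q-1)/2}e^{-\mathrm i tk/q}$. *)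

theory Defs
  imports "HOL-Probability.Probability"
begin

definition charfun :: "'a measure \<Rightarrow> ('a \<Rightarrow> real) \<Rightarrow> real \<Rightarrow> complex" where
  "charfun M X t = char (distr M borel X) t"

text \<open>Rounding to the nearest integer, ties broken upward.\<close>
definition round_near :: "real \<Rightarrow> int" where
  "round_near x = \<lfloor>x + 1/2\<rfloor>"

definition h :: "nat \<Rightarrow> real \<Rightarrow> complex" where
  "h q t = (1 / of_nat q) * (\<Sum>k = 0..<int q. exp (- \<i> * of_real t * of_int k / of_nat q))"

definition h_tilde :: "nat \<Rightarrow> real \<Rightarrow> complex" where
  "h_tilde q t =
     (if even q
      then (1 / of_nat q) * (\<Sum>k = - (int q div 2) .. int q div 2 - 1.
              exp (- \<i> * of_real t * of_int k / of_nat q))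
      else (1 / of_nat q) * (\<Sum>k = - ((int q - 1) div 2) .. (int q - 1) div 2.
              exp (- \<i> * of_real t * of_int k / of_nat q)))"

fun nth_deriv :: "nat \<Rightarrow> (real \<Rightarrow> complex) \<Rightarrow> real \<Rightarrow> complex" where
  "nth_deriv 0 f = f"
| "nth_deriv (Suc n) f = (\<lambda>t. vector_derivative (nth_deriv n f) (at t))"

end

theory Submission
  imports Defs
begin

text \<open>
  If \<open>g\<close> rounds \<open>X\<close> so that \<open>X - g X\<close> lies in a window \<open>[a, a + 1)\<close> and \<open>qX \<in> \<int>\<close>, then
  \<open>k = q (X - g X)\<close> is an integer in a set \<open>K\<close> of diameter less than \<open>q\<close>. The function
  \<open>(1/q) \<Sum>k\<in>K. exp (-itk/q) \<phi>\<^sub>X(t)\<close> is the average of the characteristic functions of the shifts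
  \<open>X - k/q\<close>, so its \<open>r\<close>-th derivative is the average of \<open>E (i(X - k/q))^r exp (it(X - k/q))\<close>
  (differentiation under the integral sign, dominated thanks to \<open>E|X|^r < \<infinity>\<close>). Every shift \<open>Y\<close>
  has \<open>qY \<in> \<int>\<close>, so \<open>\<Sum>j<q. exp (2\<pi>ijY)\<close> is \<open>q\<close> if \<open>Y \<in> \<int>\<close> and \<open>0\<close> otherwise; the only integral
  shift is \<open>g X\<close>, so evaluating at \<open>t = 2\<pi>j\<close> and summing over \<open>j\<close> leaves \<open>i^r E (g X)^r\<close>.
  Floor and nearest-integer rounding are the windows \<open>a = 0\<close> and \<open>a = -1/2\<close>.
\<close>

definition charfun_deriv :: "'a measure \<Rightarrow> ('a \<Rightarrow> real) \<Rightarrow> nat \<Rightarrow> real \<Rightarrow> complex" where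
  "charfun_deriv M Y n t = (\<integral>x. (\<i> * complex_of_real (Y x)) ^ n * iexp (t * Y x) \<partial>M)"

lemma exp_mult_charfun_eq_charfun_deriv_0:
  assumes "X \<in> borel_measurable M"
  shows "exp (- \<i> * of_real t * of_real c) * charfun M X t = charfun_deriv M (\<lambda>x. X x - c) 0 t"
proof -
  have "exp (- \<i> * of_real t * of_real c) * charfun M X t
      = (\<integral>x. exp (- \<i> * of_real t * of_real c) * iexp (t * X x) \<partial>M)"
    unfolding charfun_def char_def using assms by (simp add: integral_distr)
  also have "\<dots> = charfun_deriv M (\<lambda>x. X x - c) 0 t"
    unfolding charfun_deriv_def
    by (intro Bochner_Integration.integral_cong refl) (simp add: exp_add[symmetric] algebra_simps)
  finally show ?thesis .
qed

lemma integrable_charfun_deriv_integrand: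
  assumes "Y \<in> borel_measurable M" "integrable M (\<lambda>x. \<bar>Y x\<bar> ^ n)"
  shows "integrable M (\<lambda>x. (\<i> * complex_of_real (Y x)) ^ n * iexp (t * Y x))"
proof -
  have "integrable M (\<lambda>x. norm ((\<i> * complex_of_real (Y x)) ^ n * iexp (t * Y x)))"
    using assms(2) by (simp add: norm_mult norm_power)
  then show ?thesis
    by (subst integrable_norm_iff[symmetric]) (use assms(1) in measurable)
qed

lemma charfun_deriv_increment:
  assumes Ym: "Y \<in> borel_measurable M"
    and I: "integrable M (\<lambda>x. \<bar>Y x\<bar> ^ n)" and I': "integrable M (\<lambda>x. \<bar>Y x\<bar> ^ Suc n)"
  shows "charfun_deriv M Y n (t + s) - charfun_deriv M Y n t - s *\<^sub>R charfun_deriv M Y (Suc n) t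
    = (\<integral>x. (\<i> * complex_of_real (Y x)) ^ n * iexp (t * Y x)
              * (iexp (s * Y x) - 1 - \<i> * complex_of_real (s * Y x)) \<partial>M)"
proof -
  note int = integrable_charfun_deriv_integrand[OF Ym I, of "t + s"]
    integrable_charfun_deriv_integrand[OF Ym I, of t] integrable_charfun_deriv_integrand[OF Ym I', of t]
  have "charfun_deriv M Y n (t + s) - charfun_deriv M Y n t - s *\<^sub>R charfun_deriv M Y (Suc n) t
     = (\<integral>x. (\<i> * complex_of_real (Y x)) ^ n * iexp ((t + s) * Y x)
             - (\<i> * complex_of_real (Y x)) ^ n * iexp (t * Y x)
             - complex_of_real s * ((\<i> * complex_of_real (Y x)) ^ Suc n * iexp (t * Y x)) \<partial>M)"
    unfolding charfun_deriv_def scaleR_conv_of_real using int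
    by (simp add: integral_diff integrable_diff)
  also have "\<dots> = (\<integral>x. (\<i> * complex_of_real (Y x)) ^ n * iexp (t * Y x)
              * (iexp (s * Y x) - 1 - \<i> * complex_of_real (s * Y x)) \<partial>M)"
    by (intro Bochner_Integration.integral_cong refl) (simp add: algebra_simps exp_add distrib_right)
  finally show ?thesis .
qed

lemma norm_iexp_remainder_div_le:
  fixes s y :: real assumes "s \<noteq> 0"
  shows "cmod ((iexp (s * y) - 1 - \<i> * complex_of_real (s * y)) / complex_of_real s) \<le> 2 * \<bar>y\<bar>"
    and "cmod ((iexp (s * y) - 1 - \<i> * complex_of_real (s * y)) / complex_of_real s) \<le> \<bar>s\<bar> * y\<^sup>2 / 2"
proof -
  have "cmod (iexp (s * y) - 1 - \<i> * complex_of_real (s * y)) \<le> 2 * \<bar>s * y\<bar>"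
    using iexp_approx2[of "s * y" 1] by (simp add: diff_diff_eq)
  then show "cmod ((iexp (s * y) - 1 - \<i> * complex_of_real (s * y)) / complex_of_real s) \<le> 2 * \<bar>y\<bar>"
    using assms by (simp add: norm_divide abs_mult divide_le_eq mult.commute mult.left_commute)
  have "cmod (iexp (s * y) - 1 - \<i> * complex_of_real (s * y)) \<le> (s * y)\<^sup>2 / 2"
    using iexp_approx1[of "s * y" 1] by (simp add: numeral_2_eq_2 diff_diff_eq)
  then show "cmod ((iexp (s * y) - 1 - \<i> * complex_of_real (s * y)) / complex_of_real s) \<le> \<bar>s\<bar> * y\<^sup>2 / 2"
    using assms by (simp add: norm_divide divide_le_eq power2_eq_square abs_mult field_simps)
qed

lemma tendsto_charfun_deriv_remainder:
  assumes Ym: "Y \<in> borel_measurable M" and I: "integrable M (\<lambda>x. \<bar>Y x\<bar> ^ Suc n)"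
  shows "((\<lambda>s. (\<integral>x. (\<i> * complex_of_real (Y x)) ^ n * iexp (t * Y x)
              * (iexp (s * Y x) - 1 - \<i> * complex_of_real (s * Y x)) \<partial>M) / complex_of_real s)
          \<longlongrightarrow> 0) (at 0)"
proof -
  define R where "R s x = (\<i> * complex_of_real (Y x)) ^ n * iexp (t * Y x)
    * ((iexp (s * Y x) - 1 - \<i> * complex_of_real (s * Y x)) / complex_of_real s)" for s x
  have norm_R: "norm (R s x)
      = \<bar>Y x\<bar> ^ n * cmod ((iexp (s * Y x) - 1 - \<i> * complex_of_real (s * Y x)) / complex_of_real s)"
    for s x unfolding R_def norm_mult norm_power by simp
  have "(\<lambda>i. \<integral>x. R (S i) x \<partial>M) \<longlonglongrightarrow> (\<integral>x. 0 \<partial>M)" if S0: "\<forall>i. S i \<noteq> 0" and S: "S \<longlonglongrightarrow> 0" for S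
  proof (rule integral_dominated_convergence[where w="\<lambda>x. 2 * \<bar>Y x\<bar> ^ Suc n"])
    show "R (S i) \<in> borel_measurable M" for i unfolding R_def using Ym by measurable
    show "integrable M (\<lambda>x. 2 * \<bar>Y x\<bar> ^ Suc n)" using I by simp
    show "AE x in M. norm (R (S i) x) \<le> 2 * \<bar>Y x\<bar> ^ Suc n" for i
    proof (rule AE_I2)
      fix x
      have "norm (R (S i) x) \<le> \<bar>Y x\<bar> ^ n * (2 * \<bar>Y x\<bar>)"
        unfolding norm_R by (intro mult_left_mono norm_iexp_remainder_div_le(1) S0[rule_format]) simp
      then show "norm (R (S i) x) \<le> 2 * \<bar>Y x\<bar> ^ Suc n" by (simp add: mult_ac)
    qed
    show "AE x in M. (\<lambda>i. R (S i) x) \<longlonglongrightarrow> 0"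
    proof (rule AE_I2, rule Lim_null_comparison)
      fix x
      show "\<forall>\<^sub>F i in sequentially. norm (R (S i) x) \<le> \<bar>Y x\<bar> ^ n * (\<bar>S i\<bar> * (Y x)\<^sup>2 / 2)"
        unfolding norm_R
        by (intro always_eventually allI mult_left_mono norm_iexp_remainder_div_le(2) S0[rule_format]) simp
      show "(\<lambda>i. \<bar>Y x\<bar> ^ n * (\<bar>S i\<bar> * (Y x)\<^sup>2 / 2)) \<longlonglongrightarrow> 0"
        using S by (auto intro!: tendsto_eq_intros)
    qed
  qed simp
  then show ?thesis
    unfolding tendsto_at_iff_sequentially R_def by (simp add: comp_def)
qed

lemma has_vector_derivative_charfun_deriv:
  assumes Ym: "Y \<in> borel_measurable M"
    and I: "integrable M (\<lambda>x. \<bar>Y x\<bar> ^ n)" and I': "integrable M (\<lambda>x. \<bar>Y x\<bar> ^ Suc n)"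
  shows "(charfun_deriv M Y n has_vector_derivative charfun_deriv M Y (Suc n) t) (at t)"
  unfolding has_vector_derivative_def has_derivative_at
proof (intro conjI bounded_linear_scaleR_left)
  let ?F = "charfun_deriv M Y n" and ?D = "charfun_deriv M Y (Suc n) t"
  have "((\<lambda>s. norm ((?F (t + s) - ?F t - s *\<^sub>R ?D) / complex_of_real s)) \<longlongrightarrow> 0) (at 0)"
    unfolding charfun_deriv_increment[OF Ym I I'] tendsto_norm_zero_iff
    by (rule tendsto_charfun_deriv_remainder[OF Ym I'])
  then show "((\<lambda>s. norm (?F (t + s) - ?F t - s *\<^sub>R ?D) / norm s) \<longlongrightarrow> 0) (at 0)"
    by (simp add: norm_divide)
qed

lemma nth_deriv_eqI:
  assumes "f = F 0" and "\<And>n t. n < r \<Longrightarrow> (F n has_vector_derivative F (Suc n) t) (at t)"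
    and "n \<le> r"
  shows "nth_deriv n f = F n"
  using \<open>n \<le> r\<close>
proof (induction n)
  case 0
  then show ?case using assms(1) by simp
next
  case (Suc n)
  then show ?case using assms(2) by (auto intro!: vector_derivative_at)
qed

lemma (in finite_measure) integrable_abs_diff_power:
  fixes X :: "'a \<Rightarrow> real"
  assumes Xm: "X \<in> borel_measurable M" and I: "integrable M (\<lambda>x. \<bar>X x\<bar> ^ r)" and "m \<le> r"
  shows "integrable M (\<lambda>x. \<bar>X x - c\<bar> ^ m)"
proof (rule Bochner_Integration.integrable_bound
    [where f="\<lambda>x. 2 ^ m * (1 + \<bar>X x\<bar> ^ r + \<bar>c\<bar> ^ m)"])
  show "integrable M (\<lambda>x. 2 ^ m * (1 + \<bar>X x\<bar> ^ r + \<bar>c\<bar> ^ m))"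
    using I by (intro integrable_mult_right integrable_add) auto
  show "(\<lambda>x. \<bar>X x - c\<bar> ^ m) \<in> borel_measurable M" using Xm by measurable
  have "\<bar>y - c\<bar> ^ m \<le> 2 ^ m * (1 + \<bar>y\<bar> ^ r + \<bar>c\<bar> ^ m)" for y :: real
  proof -
    have "\<bar>y - c\<bar> ^ m \<le> (2 * max \<bar>y\<bar> \<bar>c\<bar>) ^ m" by (intro power_mono) auto
    also have "\<dots> = 2 ^ m * max \<bar>y\<bar> \<bar>c\<bar> ^ m" by (simp add: power_mult_distrib)
    also have "max \<bar>y\<bar> \<bar>c\<bar> ^ m \<le> \<bar>y\<bar> ^ m + \<bar>c\<bar> ^ m" by (simp add: max_def)
    also have "\<bar>y\<bar> ^ m \<le> 1 + \<bar>y\<bar> ^ r"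
    proof (cases "\<bar>y\<bar> \<le> 1")
      case True
      then show ?thesis by (simp add: power_le_one add_increasing2)
    next
      case False
      then have "\<bar>y\<bar> ^ m \<le> \<bar>y\<bar> ^ r" by (intro power_increasing \<open>m \<le> r\<close>) auto
      then show ?thesis by simp
    qed
    finally show ?thesis by (simp add: mult_left_mono)
  qed
  then show "AE x in M. norm (\<bar>X x - c\<bar> ^ m) \<le> norm (2 ^ m * (1 + \<bar>X x\<bar> ^ r + \<bar>c\<bar> ^ m))"
    by (intro AE_I2) (simp add: abs_mult)
qed

lemma sum_iexp_roots_of_unity:
  fixes y :: real assumes qy: "real q * y \<in> \<int>"
  shows "(\<Sum>j<q. iexp (2 * pi * real j * y)) = (if y \<in> \<int> then of_nat q else 0)"
proof -
  define w where "w = iexp (2 * pi * y)"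
  have pw: "iexp (2 * pi * real j * y) = w ^ j" for j
    unfolding w_def by (subst exp_of_nat_mult[symmetric]) (simp add: algebra_simps)
  have w1: "w = 1 \<longleftrightarrow> y \<in> \<int>"
  proof
    assume "w = 1"
    then obtain n :: int where "2 * pi * y = of_int (2 * n) * pi" unfolding w_def exp_eq_1 by auto
    then show "y \<in> \<int>" by simp
  next
    assume "y \<in> \<int>"
    then show "w = 1" unfolding w_def exp_eq_1 by (auto elim!: Ints_cases simp: algebra_simps)
  qed
  have "w ^ q = 1"
  proof -
    from qy obtain n where n: "real q * y = of_int n" by (auto elim: Ints_cases)
    have "w ^ q = iexp (2 * pi * real q * y)" by (simp only: pw)
    also have "\<dots> = 1"
      unfolding exp_eq_1 using n by (auto intro!: exI[of _ n] simp: algebra_simps)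
    finally show ?thesis .
  qed
  then show ?thesis unfolding pw using w1 by (auto simp: geometric_sum)
qed

lemma divide_in_Ints_imp_eq:
  fixes k l :: int
  assumes "\<bar>k - l\<bar> < int q" "of_int (k - l) / real q \<in> \<int>"
  shows "k = l"
proof -
  have q: "q > 0" using assms(1) by linarith
  from assms(2) obtain m where m: "of_int (k - l) / real q = of_int m" by (auto elim: Ints_cases)
  have "real_of_int (k - l) = real_of_int (int q * m)"
    using m q by (simp add: field_simps)
  then have "k - l = int q * m" by (simp only: of_int_eq_iff)
  then have "int q * \<bar>m\<bar> < int q * 1" using assms(1) by (simp add: abs_mult)
  then have "\<bar>m\<bar> < 1" by (simp only: mult_less_cancel_left)
  then show ?thesis using \<open>k - l = int q * m\<close> by simp
qed

lemma sum_shifts_sum_iexp_roots_of_unity: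
  fixes f :: "real \<Rightarrow> complex" and x :: real and n k0 :: int and K :: "int set"
  assumes K: "finite K" and diam: "\<forall>k\<in>K. \<forall>l\<in>K. \<bar>k - l\<bar> < int q"
    and k0: "k0 \<in> K" "real q * (x - of_int n) = of_int k0"
  shows "(\<Sum>k\<in>K. \<Sum>j<q. f (x - of_int k / real q) * iexp (2 * pi * real j * (x - of_int k / real q)))
       = of_nat q * f (of_int n)"
proof -
  have q: "q > 0" using diam k0(1) by fastforce
  have x: "x - of_int k / real q = of_int n + of_int (k0 - k) / real q" for k
    using k0(2) q by (simp add: field_simps)
  have "real q * (x - of_int k / real q) = of_int (int q * n + k0 - k)" for k
    unfolding x using q by (simp add: field_simps)
  then have roots: "(\<Sum>j<q. iexp (2 * pi * real j * (x - of_int k / real q)))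
      = (if x - of_int k / real q \<in> \<int> then of_nat q else 0)" for k
    by (intro sum_iexp_roots_of_unity) (metis Ints_of_int)
  have inner: "(\<Sum>j<q. f (x - of_int k / real q) * iexp (2 * pi * real j * (x - of_int k / real q)))
      = f (x - of_int k / real q) * (if x - of_int k / real q \<in> \<int> then of_nat q else 0)" for k
    by (simp only: sum_distrib_left[symmetric] roots)
  have "x - of_int k / real q \<in> \<int> \<longleftrightarrow> k = k0" if "k \<in> K" for k
  proof
    assume "x - of_int k / real q \<in> \<int>"
    then have "of_int (k0 - k) / real q \<in> \<int>" unfolding x by (metis Ints_diff Ints_of_int add_diff_cancel_left')
    then show "k = k0" using divide_in_Ints_imp_eq diam that k0(1) by fastforce
  qed (simp add: x)
  then have "(\<Sum>k\<in>K. \<Sum>j<q. f (x - of_int k / real q) * iexp (2 * pi * real j * (x - of_int k / real q)))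
      = (\<Sum>k\<in>K. if k = k0 then f (x - of_int k0 / real q) * of_nat q else 0)"
    unfolding inner by (intro sum.cong refl) simp
  also have "\<dots> = of_nat q * f (of_int n)" using K k0(1) by (simp add: x)
  finally show ?thesis .
qed

lemma nth_deriv_mean_shift_charfun:
  fixes X :: "'a \<Rightarrow> real" and K :: "int set"
  assumes M: "finite_measure M" and Xm: "X \<in> borel_measurable M"
    and I: "integrable M (\<lambda>x. \<bar>X x\<bar> ^ r)" and "n \<le> r"
  shows "nth_deriv n
      (\<lambda>t. (1 / of_nat q) * (\<Sum>k\<in>K. exp (- \<i> * of_real t * of_int k / of_nat q)) * charfun M X t)
    = (\<lambda>t. (1 / of_nat q) * (\<Sum>k\<in>K. charfun_deriv M (\<lambda>x. X x - of_int k / real q) n t))"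
proof (rule nth_deriv_eqI[OF _ _ \<open>n \<le> r\<close>])
  have "exp (- \<i> * of_real t * of_int k / of_nat q) * charfun M X t
      = charfun_deriv M (\<lambda>x. X x - of_int k / real q) 0 t" for t k
    using exp_mult_charfun_eq_charfun_deriv_0[OF Xm, of t "of_int k / real q"] by simp
  then show "(\<lambda>t. (1 / of_nat q) * (\<Sum>k\<in>K. exp (- \<i> * of_real t * of_int k / of_nat q))
      * charfun M X t) = (\<lambda>t. (1 / of_nat q) * (\<Sum>k\<in>K. charfun_deriv M (\<lambda>x. X x - of_int k / real q) 0 t))"
    by (simp add: sum_distrib_right mult.assoc)
  show "((\<lambda>t. (1 / of_nat q) * (\<Sum>k\<in>K. charfun_deriv M (\<lambda>x. X x - of_int k / real q) m t))
      has_vector_derivative (1 / of_nat q) * (\<Sum>k\<in>K. charfun_deriv M (\<lambda>x. X x - of_int k / real q) (Suc m) t))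
      (at t)" if "m < r" for m t
    using that
    by (intro has_vector_derivative_mult_right has_vector_derivative_sum
        has_vector_derivative_charfun_deriv finite_measure.integrable_abs_diff_power[OF M Xm I])
       (auto intro!: borel_measurable_diff Xm)
qed

lemma finite_int_window:
  fixes c d :: "'a :: floor_ceiling"
  shows "finite {k :: int. c \<le> of_int k \<and> of_int k < d}"
  by (rule finite_subset[of _ "{\<lceil>c\<rceil> .. \<lfloor>d\<rfloor>}"]) (auto simp: ceiling_le_iff le_floor_iff)

lemma int_window_diameter:
  assumes "k \<in> {k :: int. real q * a \<le> of_int k \<and> of_int k < real q * (a + 1)}"
    and "l \<in> {k :: int. real q * a \<le> of_int k \<and> of_int k < real q * (a + 1)}"
  shows "\<bar>k - l\<bar> < int q"
proof -
  have "\<bar>real_of_int k - real_of_int l\<bar> < real q"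
    using assms unfolding abs_less_iff by (auto simp: algebra_simps)
  then have "real_of_int \<bar>k - l\<bar> < real_of_int (int q)" by simp
  then show ?thesis by (simp only: of_int_less_iff)
qed

lemma window_mult_diff_in_Ints:
  fixes x a :: real and n :: int
  assumes q: "q \<ge> 1" and qx: "real q * x \<in> \<int>" and window: "a \<le> x - of_int n" "x - of_int n < a + 1"
  shows "\<exists>k. real q * (x - of_int n) = of_int k \<and> real q * a \<le> of_int k \<and> of_int k < real q * (a + 1)"
proof -
  from qx obtain m where m: "real q * x = of_int m" by (auto elim: Ints_cases)
  have "real q * (x - of_int n) = of_int (m - int q * n)" using m by (simp add: algebra_simps)
  moreover have "real q * a \<le> real q * (x - of_int n)" using window(1) by (intro mult_left_mono) auto
  moreover have "real q * (x - of_int n) < real q * (a + 1)" using window(2) q by simp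
  ultimately show ?thesis by metis
qed

lemma integral_rounding_power_eq_sum_nth_deriv:
  fixes M :: "'a measure" and X :: "'a \<Rightarrow> real" and g :: "'a \<Rightarrow> int" and a :: real
  assumes M: "finite_measure M" and Xm: "X \<in> borel_measurable M"
    and gm: "(\<lambda>x. real_of_int (g x)) \<in> borel_measurable M"
    and q: "q \<ge> 1" and qX: "AE x in M. real q * X x \<in> \<int>"
    and window: "AE x in M. a \<le> X x - of_int (g x) \<and> X x - of_int (g x) < a + 1"
    and I: "integrable M (\<lambda>x. \<bar>X x\<bar> ^ r)"
  defines "K \<equiv> {k :: int. real q * a \<le> of_int k \<and> of_int k < real q * (a + 1)}"
  shows "complex_of_real (\<integral>x. real_of_int (g x) ^ r \<partial>M)
      = \<i> powi (- int r) * (\<Sum>j<q. nth_deriv r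
          (\<lambda>t. (1 / of_nat q) * (\<Sum>k\<in>K. exp (- \<i> * of_real t * of_int k / of_nat q)) * charfun M X t)
          (2 * pi * real j))"
proof -
  define Y where "Y k x = X x - of_int k / real q" for k x
  define F where "F n t = (1 / of_nat q) * (\<Sum>k\<in>K. charfun_deriv M (Y k) n t)" for n t
  have Ym [measurable]: "Y k \<in> borel_measurable M" for k unfolding Y_def using Xm by measurable
  have IY: "integrable M (\<lambda>x. \<bar>Y k x\<bar> ^ r)" for k
    unfolding Y_def by (rule finite_measure.integrable_abs_diff_power[OF M Xm I order.refl])
  have K: "finite K" unfolding K_def by (rule finite_int_window)
  have diam: "\<forall>k\<in>K. \<forall>l\<in>K. \<bar>k - l\<bar> < int q" unfolding K_def using int_window_diameter by blast
  have derivs: "nth_deriv r (\<lambda>t. (1 / of_nat q) * (\<Sum>k\<in>K. exp (- \<i> * of_real t * of_int k / of_nat q))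
      * charfun M X t) = F r"
    unfolding nth_deriv_mean_shift_charfun[OF M Xm I order.refl] F_def Y_def [abs_def] ..
  have "(\<Sum>j<q. F r (2 * pi * real j))
      = (\<integral>x. (1 / of_nat q) * (\<Sum>k\<in>K. \<Sum>j<q. (\<i> * complex_of_real (Y k x)) ^ r
            * iexp (2 * pi * real j * Y k x)) \<partial>M)"
    using integrable_charfun_deriv_integrand[OF Ym IY, of _ "2 * pi * real _"]
    by (simp add: F_def charfun_deriv_def Bochner_Integration.integral_sum
        sum_distrib_left sum.swap[of _ K])
  also have "\<dots> = (\<integral>x. \<i> ^ r * complex_of_real (real_of_int (g x) ^ r) \<partial>M)"
  proof (rule integral_cong_AE)
    show "AE x in M. (1 / of_nat q) * (\<Sum>k\<in>K. \<Sum>j<q. (\<i> * complex_of_real (Y k x)) ^ r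
            * iexp (2 * pi * real j * Y k x)) = \<i> ^ r * complex_of_real (real_of_int (g x) ^ r)"
      using qX window
    proof eventually_elim
      case (elim x)
      then obtain k0 where "real q * (X x - of_int (g x)) = of_int k0" "k0 \<in> K"
        using window_mult_diff_in_Ints[OF q] unfolding K_def by blast
      then show ?case
        using sum_shifts_sum_iexp_roots_of_unity[OF K diam, where x="X x" and n="g x"
            and f="\<lambda>y. (\<i> * complex_of_real y) ^ r"] q
        by (simp add: Y_def power_mult_distrib)
    qed
  qed (use gm in measurable)
  also have "\<dots> = \<i> ^ r * complex_of_real (\<integral>x. real_of_int (g x) ^ r \<partial>M)"
    by (simp only: integral_mult_right_zero integral_complex_of_real)
  finally show ?thesis
    unfolding derivs by (simp add: power_int_minus power_int_of_nat field_simps)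
qed

lemma floor_window:
  fixes x :: real
  shows "0 \<le> x - of_int \<lfloor>x\<rfloor> \<and> x - of_int \<lfloor>x\<rfloor> < 1"
  using of_int_floor_le[of x] real_of_int_floor_add_one_gt[of x] by linarith

lemma round_near_window:
  fixes x :: real
  shows "- 1 / 2 \<le> x - of_int (round_near x) \<and> x - of_int (round_near x) < 1 / 2"
  unfolding round_near_def
  using of_int_floor_le[of "x + 1 / 2"] real_of_int_floor_add_one_gt[of "x + 1 / 2"] by linarith

lemma window_zero_eq_atLeastLessThan:
  "{k :: int. real q * 0 \<le> of_int k \<and> of_int k < real q * (0 + 1)} = {0..<int q}"
  by auto

lemma window_centered_eq:
  "{k :: int. real q * (- 1 / 2) \<le> of_int k \<and> of_int k < real q * (- 1 / 2 + 1)}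
    = (if even q then {- (int q div 2) .. int q div 2 - 1}
       else {- ((int q - 1) div 2) .. (int q - 1) div 2})"
proof -
  have "real q * (- 1 / 2) \<le> of_int k \<and> of_int k < real q * (- 1 / 2 + 1)
      \<longleftrightarrow> of_int (- int q) \<le> real_of_int (2 * k) \<and> real_of_int (2 * k) < of_int (int q)"
    for k :: int by (simp only: of_int_minus of_int_mult of_int_of_nat_eq of_int_numeral) (simp add: field_simps)
  then have "real q * (- 1 / 2) \<le> of_int k \<and> of_int k < real q * (- 1 / 2 + 1)
      \<longleftrightarrow> - int q \<le> 2 * k \<and> 2 * k < int q" for k :: int
    by (simp only: of_int_le_iff of_int_less_iff)
  moreover have "- int q \<le> 2 * k \<and> 2 * k < int q \<longleftrightarrow> k \<in> (if even q then {- (int q div 2) .. int q div 2 - 1}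
      else {- ((int q - 1) div 2) .. (int q - 1) div 2})" for k
    by (cases "even q") (auto elim!: evenE oddE)
  ultimately show ?thesis unfolding set_eq_iff mem_Collect_eq by metis
qed

theorem theorem2:
  fixes M :: "'a measure" and X :: "'a \<Rightarrow> real" and q r :: nat
  assumes "prob_space M"
    and "X \<in> borel_measurable M"
    and "q \<ge> 1"
    and "AE x in M. real q * X x \<in> \<int>"
    and "r \<ge> 1"
    and "integrable M (\<lambda>x. \<bar>X x\<bar> ^ r)"
  shows "complex_of_real (\<integral>x. real_of_int \<lfloor>X x\<rfloor> ^ r \<partial>M)
           = \<i> powi (- int r) *
             (\<Sum>j<q. nth_deriv r (\<lambda>t. h q t * charfun M X t) (2 * pi * real j))
     \<and> complex_of_real (\<integral>x. real_of_int (round_near (X x)) ^ r \<partial>M)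
           = \<i> powi (- int r) *
             (\<Sum>j<q. nth_deriv r (\<lambda>t. h_tilde q t * charfun M X t) (2 * pi * real j))"
proof
  have M: "finite_measure M" using assms(1) by (rule prob_space.axioms(1))
  note rounding = integral_rounding_power_eq_sum_nth_deriv[OF M assms(2) _ assms(3,4) _ assms(6)]
  have floor_window: "AE x in M. 0 \<le> X x - of_int \<lfloor>X x\<rfloor> \<and> X x - of_int \<lfloor>X x\<rfloor> < 0 + 1"
    using floor_window by (intro AE_I2) auto
  have h_window: "h q = (\<lambda>t. (1 / of_nat q) * (\<Sum>k\<in>{k :: int. real q * 0 \<le> of_int k \<and> of_int k < real q * (0 + 1)}.
      exp (- \<i> * of_real t * of_int k / of_nat q)))"
    unfolding window_zero_eq_atLeastLessThan h_def ..
  show "complex_of_real (\<integral>x. real_of_int \<lfloor>X x\<rfloor> ^ r \<partial>M)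
      = \<i> powi (- int r) * (\<Sum>j<q. nth_deriv r (\<lambda>t. h q t * charfun M X t) (2 * pi * real j))"
    unfolding h_window by (rule rounding[OF _ floor_window]) (use assms(2) in measurable)
  have round_window: "AE x in M. - 1 / 2 \<le> X x - of_int (round_near (X x))
      \<and> X x - of_int (round_near (X x)) < - 1 / 2 + 1"
    using round_near_window by (intro AE_I2) auto
  have h_tilde_window: "h_tilde q = (\<lambda>t. (1 / of_nat q) * (\<Sum>k\<in>{k :: int. real q * (- 1 / 2) \<le> of_int k
      \<and> of_int k < real q * (- 1 / 2 + 1)}. exp (- \<i> * of_real t * of_int k / of_nat q)))"
    unfolding window_centered_eq h_tilde_def by (simp add: fun_eq_iff)
  show "complex_of_real (\<integral>x. real_of_int (round_near (X x)) ^ r \<partial>M)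
      = \<i> powi (- int r) * (\<Sum>j<q. nth_deriv r (\<lambda>t. h_tilde q t * charfun M X t) (2 * pi * real j))"
    unfolding h_tilde_window
    by (rule rounding[OF _ round_window]) (use assms(2) in \<open>unfold round_near_def, measurable\<close>)
qed

end
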